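(* Let $I$ be a monomial ideal of $R=K[x_1,\ldots,x_d]$ ($K$ a field) and let $r\in\mathbb{R}$, $r\ge0$. Let $\mathcal{S}(I,r)$ denote the set of lattice points in $\operatorname{hype}(I,r)$. Then (1) $\lceil r\cdot\operatorname{np}(I)\rceil:=\{(\lceil p_1\rceil,\ldots,\lceil p_d\rceil)\mid \mathbf{p}\in r\cdot\operatorname{np}(I)\}\subseteq\mathcal{S}(I,r)$; (2) $\overline{I^r}=(\{\mathbf{x}^{\mathbf{a}}\mid \mathbf{a}\in r\cdot NP(I)\cap\operatorname{hype}(I,r)\cap\mathbb{N}^d\})$.
   Context: $\mathbb{N}$ denotes the non-negative integers and $\mathbf{x}^{\mathbf{a}}=x_1^{a_1}\cdots x_d^{a_d}$. $G(I)$ is the minimal monomial generating set of $I$. $NP(I)$ is the convex hull in $\mathbb{R}^d$ of $\{\mathbf{a}\in\mathbb{N}^d\mid \mathbf{x}^{\mathbf{a}}\in I\}$ and $\operatorname{np}(I)$ is the convex hull of $\{\mathbf{a}\mid \mathbf{x}^{\mathbf{a}}\in G(I)\}$. For real $r\ge0$, $\overline{I^r}=(\{\mathbf{x}^{\mathbf{a}}\mid \mathbf{a}\in r\cdot NP(I)\cap\mathbb{N}^d\})$. Let $\mathcal{V}(I,r)=\{(\lceil ra_1\rceil,\ldots,\lceil ra_d\rceil)\mid \mathbf{x}^{\mathbf{a}}\in G(I)\}$, and for $1\le i\le d$ let $\min(\mathcal{V},i)=\min_{\alpha\in\mathcal{V}(I,r)}\alpha_i$ and $\max(\mathcal{V},i)=\max_{\alpha\in\mathcal{V}(I,r)}\alpha_i$.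 The hyperrectangle is $\operatorname{hype}(I,r)=\prod_{i=1}^d[\min(\mathcal{V},i),\max(\mathcal{V},i)]\subseteq\mathbb{R}^d$. *)

theory Defs
  imports "HOL-Analysis.Analysis"
begin

text \<open>Monomials in K[x_1,...,x_d] are identified with exponent vectors
  a :: 'n \<Rightarrow> nat, where the finite type 'n indexes the d variables.
  x^a divides x^b iff a \<le> b (pointwise order).  A monomial ideal I is determined
  by (and determines) the set E of exponents of the monomials it contains; such sets
  are exactly the upward closed subsets of \<nat>^d.\<close>

definition monomial_ideal :: "('n::finite \<Rightarrow> nat) set \<Rightarrow> bool" where
  "monomial_ideal E \<longleftrightarrow> (\<forall>a\<in>E. \<forall>b. a \<le> b \<longrightarrow> b \<in> E)"

definition ideal_gen :: "('n::finite \<Rightarrow> nat) set \<Rightarrow> ('n \<Rightarrow> nat) set" where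
  "ideal_gen S = {b. \<exists>a\<in>S. a \<le> b}"

definition gens :: "('n::finite \<Rightarrow> nat) set \<Rightarrow> ('n \<Rightarrow> nat) set" where
  "gens E = {a\<in>E. \<forall>b\<in>E. b \<le> a \<longrightarrow> b = a}"

definition rv :: "('n::finite \<Rightarrow> nat) \<Rightarrow> real^'n" where
  "rv a = (\<chi> i. real (a i))"

definition NP :: "('n::finite \<Rightarrow> nat) set \<Rightarrow> (real^'n) set" where
  "NP E = convex hull (rv ` E)"

definition np :: "('n::finite \<Rightarrow> nat) set \<Rightarrow> (real^'n) set" where
  "np E = convex hull (rv ` gens E)"

definition int_closure_pow :: "('n::finite \<Rightarrow> nat) set \<Rightarrow> real \<Rightarrow> ('n \<Rightarrow> nat) set" where
  "int_closure_pow E r = ideal_gen {a. rv a \<in> (\<lambda>x. r *\<^sub>R x) ` NP E}"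

definition VV :: "('n::finite \<Rightarrow> nat) set \<Rightarrow> real \<Rightarrow> ('n \<Rightarrow> int) set" where
  "VV E r = {(\<lambda>i. \<lceil>r * real (a i)\<rceil>) | a. a \<in> gens E}"

definition hype :: "('n::finite \<Rightarrow> nat) set \<Rightarrow> real \<Rightarrow> (real^'n) set" where
  "hype E r = {p. \<forall>i. real_of_int (Min ((\<lambda>\<alpha>. \<alpha> i) ` VV E r)) \<le> p $ i
                     \<and> p $ i \<le> real_of_int (Max ((\<lambda>\<alpha>. \<alpha> i) ` VV E r))}"

definition SS :: "('n::finite \<Rightarrow> nat) set \<Rightarrow> real \<Rightarrow> (real^'n) set" where
  "SS E r = {p \<in> hype E r. \<forall>i. p $ i \<in> \<int>}"

definition ceil_set :: "(real^'n::finite) set \<Rightarrow> (real^'n) set" where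
  "ceil_set P = {(\<chi> i. real_of_int \<lceil>p $ i\<rceil>) | p. p \<in> P}"

end

theory Submission
  imports Defs "HOL-Library.Ramsey"
begin

text \<open>Every point of NP(I) lies coordinatewise above a point of np(I), and NP(I) is closed under
  moving upwards (because I is). As np(I) lies in the bounding box of the generator exponents (finitely
  many, by Dickson's lemma), rounding up r times one of its points lands in the rounded-up box, which is
  hype(I,r): this is (1). For (2), cap each coordinate of an exponent a in r NP(I) at the upper end of
  hype(I,r), i.e. at ceil(r max_g g_i). The capped vector divides x^a and still dominates r times a point
  of np(I), so it stays in r NP(I); its coordinates are at least ceil(r min_g g_i) because
  a_i >= r min_g g_i.\<close>

text \<open>Colour each pair i < j by the set of coordinates in which f decreases from i to j. By Ramsey's
  theorem some infinite set is monochromatic, and a nonempty colour would give an infinite strictly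
  decreasing sequence of naturals.\<close>

lemma dickson_good_pair:
  fixes f :: "nat \<Rightarrow> 'n::finite \<Rightarrow> nat"
  shows "\<exists>i j. i < j \<and> f i \<le> f j"
proof -
  define drops where "drops X = {k. f (Max X) k < f (Min X) k}" for X :: "nat set"
  obtain h :: "'n set \<Rightarrow> nat" where h: "bij_betw h UNIV {0..<card (UNIV :: 'n set set)}"
    using ex_bij_betw_finite_nat[of "UNIV :: 'n set set"] by auto
  have colours: "\<forall>x\<in>UNIV. \<forall>y\<in>UNIV. x \<noteq> y \<longrightarrow> h (drops {x, y}) < card (UNIV :: 'n set set)"
    using h by (auto simp: bij_betw_def)
  obtain Y t where Y: "infinite Y"
    and hom: "\<And>x y. x \<in> Y \<Longrightarrow> y \<in> Y \<Longrightarrow> x \<noteq> y \<Longrightarrow> h (drops {x, y}) = t"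
    using Ramsey2[OF infinite_UNIV_nat colours] by auto
  obtain x0 where "x0 \<in> Y"
    using Y by (metis finite.emptyI ex_in_conv)
  then obtain y0 where xy0: "x0 \<in> Y" "y0 \<in> Y" "x0 < y0"
    using Y by (meson infinite_nat_iff_unbounded)
  define K where "K = drops {x0, y0}"
  have drops_eq: "{k. f y k < f x k} = K" if "x \<in> Y" "y \<in> Y" "x < y" for x y
  proof -
    have "h (drops {x, y}) = h K"
      using hom[OF that(1,2)] hom[OF xy0(1,2)] that(3) xy0(3) unfolding K_def by simp
    then have "drops {x, y} = K"
      using h by (auto simp: bij_betw_def inj_def)
    then show ?thesis
      using that by (simp add: drops_def max_def min_def)
  qed
  show ?thesis
  proof (cases "K = {}")
    case True
    then have "f x0 \<le> f y0"
      using drops_eq[OF xy0] by (auto simp: le_fun_def not_less)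
    then show ?thesis using xy0 by blast
  next
    case False
    then obtain k where "k \<in> K" by blast
    then have decr: "f y k < f x k" if "x \<in> Y" "y \<in> Y" "x < y" for x y
      using drops_eq[OF that] by blast
    define m where "m = (LEAST y. y \<in> Y)"
    have m: "m \<in> Y" "\<And>y. y \<in> Y \<Longrightarrow> m \<le> y"
      using xy0 unfolding m_def by (auto intro: LeastI Least_le)
    have "inj_on (\<lambda>y. f y k) Y"
      by (rule inj_onI) (metis decr less_irrefl linorder_neqE_nat)
    moreover have "(\<lambda>y. f y k) ` Y \<subseteq> {..f m k}"
      using decr m by (force simp: le_less)
    ultimately have "finite Y"
      by (meson finite_atMost finite_imageD finite_subset)
    with Y show ?thesis by contradiction
  qed
qed

lemma finite_antichain_nat_fun:
  fixes A :: "('n::finite \<Rightarrow> nat) set"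
  assumes "\<And>a b. a \<in> A \<Longrightarrow> b \<in> A \<Longrightarrow> a \<le> b \<Longrightarrow> a = b"
  shows "finite A"
proof (rule ccontr)
  assume "infinite A"
  then obtain f :: "nat \<Rightarrow> 'n \<Rightarrow> nat" where "inj f" "range f \<subseteq> A"
    using infinite_countable_subset by blast
  moreover obtain i j where "i < j" "f i \<le> f j"
    using dickson_good_pair by blast
  ultimately show False
    using assms by (metis inj_eq less_irrefl range_subsetD)
qed

lemma finite_gens: "finite (gens E)"
  by (rule finite_antichain_nat_fun) (auto simp: gens_def)

lemma gens_subset: "gens E \<subseteq> E"
  by (auto simp: gens_def)

lemma ex_gens_le:
  assumes "e \<in> E"
  shows "\<exists>g\<in>gens E. g \<le> e"
proof -
  obtain a where a: "a \<in> E" "a \<le> e"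
    and a_min: "\<And>b. b \<in> E \<Longrightarrow> b \<le> e \<Longrightarrow> sum a UNIV \<le> sum b UNIV"
    using ex_has_least_nat[of "\<lambda>a. a \<in> E \<and> a \<le> e" e "\<lambda>a. sum a UNIV"] assms by auto
  have "b = a" if b: "b \<in> E" "b \<le> a" for b
  proof -
    have "sum a UNIV \<le> sum b UNIV"
      using a_min b a(2) order.trans by blast
    moreover have "sum b UNIV \<le> sum a UNIV"
      using b(2) by (simp add: le_fun_def sum_mono)
    ultimately have "sum b UNIV = sum a UNIV" by simp
    then show "b = a"
      using sum_mono_inv[of b UNIV a] b(2) by (simp add: le_fun_def fun_eq_iff)
  qed
  then have "a \<in> gens E"
    using a(1) by (simp add: gens_def)
  with a(2) show ?thesis by blast
qed

lemma rv_nth [simp]: "rv a $ i = real (a i)"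
  by (simp add: rv_def)

lemma rv_le_rv_iff [simp]: "rv a \<le> rv b \<longleftrightarrow> a \<le> b"
  by (simp add: less_eq_vec_def le_fun_def)

definition lower_corner :: "('n::finite \<Rightarrow> nat) set \<Rightarrow> real^'n" where
  "lower_corner S = (\<chi> i. real (Min ((\<lambda>a. a i) ` S)))"

definition upper_corner :: "('n::finite \<Rightarrow> nat) set \<Rightarrow> real^'n" where
  "upper_corner S = (\<chi> i. real (Max ((\<lambda>a. a i) ` S)))"

lemma convex_hull_rv_subset_corners:
  assumes "finite S"
  shows "convex hull (rv ` S) \<subseteq> {lower_corner S..upper_corner S}"
proof (rule hull_minimal)
  show "rv ` S \<subseteq> {lower_corner S..upper_corner S}"
    using assms by (auto simp: lower_corner_def upper_corner_def less_eq_vec_def)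
  show "convex {lower_corner S..upper_corner S}"
    by (simp add: interval_cbox_cart)
qed

lemma np_subset_corners: "np E \<subseteq> {lower_corner (gens E)..upper_corner (gens E)}"
  unfolding np_def using finite_gens by (rule convex_hull_rv_subset_corners)

lemma hype_eq_corners:
  assumes "gens E \<noteq> {}" and "r \<ge> 0"
  shows "hype E r = {p. \<forall>i. of_int \<lceil>r * lower_corner (gens E) $ i\<rceil> \<le> p $ i
                            \<and> p $ i \<le> of_int \<lceil>r * upper_corner (gens E) $ i\<rceil>}"
proof -
  have mono: "mono (\<lambda>n::nat. \<lceil>r * real n\<rceil>)"
    using assms(2) by (intro monoI ceiling_mono mult_left_mono) auto
  have coords: "(\<lambda>\<alpha>. \<alpha> i) ` VV E r = (\<lambda>n. \<lceil>r * real n\<rceil>) ` (\<lambda>g. g i) ` gens E" for i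
    unfolding VV_def by auto
  have "Min ((\<lambda>\<alpha>. \<alpha> i) ` VV E r) = \<lceil>r * lower_corner (gens E) $ i\<rceil>"
    and "Max ((\<lambda>\<alpha>. \<alpha> i) ` VV E r) = \<lceil>r * upper_corner (gens E) $ i\<rceil>" for i
    unfolding coords lower_corner_def upper_corner_def vec_lambda_beta
    using finite_gens[of E] assms(1)
    by (auto intro!: mono_Min_commute[OF mono, symmetric] mono_Max_commute[OF mono, symmetric])
  then show ?thesis
    unfolding hype_def by simp
qed

lemma ceil_set_scaled_np_subset_SS:
  assumes "r \<ge> 0"
  shows "ceil_set ((\<lambda>x. r *\<^sub>R x) ` np E) \<subseteq> SS E r"
proof
  fix p assume "p \<in> ceil_set ((\<lambda>x. r *\<^sub>R x) ` np E)"
  then obtain x where x: "x \<in> np E" and p: "p = (\<chi> i. of_int \<lceil>r * x $ i\<rceil>)"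
    unfolding ceil_set_def by auto
  then have "gens E \<noteq> {}"
    by (auto simp: np_def)
  have "lower_corner (gens E) \<le> x" "x \<le> upper_corner (gens E)"
    using subsetD[OF np_subset_corners x] by simp_all
  then have "\<lceil>r * lower_corner (gens E) $ i\<rceil> \<le> \<lceil>r * x $ i\<rceil>"
    and "\<lceil>r * x $ i\<rceil> \<le> \<lceil>r * upper_corner (gens E) $ i\<rceil>" for i
    using assms by (auto simp: less_eq_vec_def intro!: ceiling_mono mult_left_mono)
  then show "p \<in> SS E r"
    unfolding SS_def hype_eq_corners[OF \<open>gens E \<noteq> {}\<close> assms] p by auto
qed

lemma convex_hull_dominated:
  fixes A B :: "(real^'n) set"
  assumes "\<And>x. x \<in> A \<Longrightarrow> \<exists>y\<in>B. y \<le> x" and "x \<in> convex hull A"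
  shows "\<exists>y\<in>convex hull B. y \<le> x"
proof -
  let ?U = "{x. \<exists>y\<in>convex hull B. y \<le> x}"
  have "convex ?U"
  proof (rule convexI)
    fix x1 x2 and u v :: real
    assume "x1 \<in> ?U" "x2 \<in> ?U" and uv: "0 \<le> u" "0 \<le> v" "u + v = 1"
    then obtain y1 y2 where y: "y1 \<in> convex hull B" "y1 \<le> x1" "y2 \<in> convex hull B" "y2 \<le> x2"
      by blast
    have "u *\<^sub>R y1 + v *\<^sub>R y2 \<in> convex hull B"
      using convexD[OF convex_convex_hull y(1,3)] uv by blast
    moreover have "u *\<^sub>R y1 + v *\<^sub>R y2 \<le> u *\<^sub>R x1 + v *\<^sub>R x2"
      using y uv by (auto simp: less_eq_vec_def intro!: add_mono mult_left_mono)
    ultimately show "u *\<^sub>R x1 + v *\<^sub>R x2 \<in> ?U" by blast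
  qed
  moreover have "A \<subseteq> ?U"
    using assms(1) hull_inc by fastforce
  ultimately have "convex hull A \<subseteq> ?U"
    by (rule hull_minimal[rotated])
  with assms(2) show ?thesis by blast
qed

lemma NP_dominates_np:
  assumes "x \<in> NP E"
  shows "\<exists>y\<in>np E. y \<le> x"
  using convex_hull_dominated[of "rv ` E" "rv ` gens E" x] assms ex_gens_le
  unfolding NP_def np_def by fastforce

lemma np_subset_NP: "np E \<subseteq> NP E"
  unfolding np_def NP_def by (rule hull_mono) (use gens_subset in blast)

lemma NP_add_axis:
  fixes E :: "('n::finite \<Rightarrow> nat) set"
  assumes E: "monomial_ideal E" and y: "y \<in> NP E" and t: "t \<ge> 0"
  shows "y + t *\<^sub>R axis k 1 \<in> NP E"
proof -
  define N where "N = Suc (nat \<lceil>t\<rceil>)"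
  have N: "t \<le> real N" "real N > 0"
    unfolding N_def by linarith+
  define v :: "real^'n" where "v = real N *\<^sub>R axis k 1"
  have shift: "(\<lambda>x. v + x) ` rv ` E \<subseteq> rv ` E"
  proof
    fix z assume "z \<in> (\<lambda>x. v + x) ` rv ` E"
    then obtain e where e: "e \<in> E" "z = v + rv e" by auto
    define e' where "e' = e(k := e k + N)"
    have "e \<le> e'"
      by (simp add: e'_def le_fun_def)
    then have "e' \<in> E"
      using E e(1) unfolding monomial_ideal_def by blast
    moreover have "z = rv e'"
      using e by (simp add: vec_eq_iff e'_def v_def axis_def)
    ultimately show "z \<in> rv ` E" by blast
  qed
  have "v + y \<in> (\<lambda>x. v + x) ` NP E"
    using y by blast
  also have "\<dots> = convex hull ((\<lambda>x. v + x) ` rv ` E)"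
    unfolding NP_def by (rule convex_hull_translation[symmetric])
  also have "\<dots> \<subseteq> NP E"
    unfolding NP_def using shift by (rule hull_mono)
  finally have "v + y \<in> NP E" .
  then have "(1 - t / N) *\<^sub>R y + (t / N) *\<^sub>R (v + y) \<in> NP E"
    using y N t unfolding NP_def by (intro convexD[OF convex_convex_hull]) auto
  moreover have "(1 - t / N) *\<^sub>R y + (t / N) *\<^sub>R (v + y) = y + t *\<^sub>R axis k 1"
    using N by (simp add: v_def algebra_simps)
  ultimately show ?thesis by simp
qed

lemma NP_upward_closed:
  fixes E :: "('n::finite \<Rightarrow> nat) set"
  assumes E: "monomial_ideal E" and y: "y \<in> NP E" and "y \<le> z"
  shows "z \<in> NP E"
proof -
  define d where "d = real CARD('n)"
  have d: "d > 0" by (simp add: d_def)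
  have "(\<Sum>k\<in>UNIV. (1 / d) *\<^sub>R (y + (d * (z - y) $ k) *\<^sub>R axis k 1)) \<in> NP E"
    unfolding NP_def
  proof (rule convex_sum)
    show "y + (d * (z - y) $ k) *\<^sub>R axis k 1 \<in> convex hull (rv ` E)" for k
      using NP_add_axis[OF E y] d \<open>y \<le> z\<close> unfolding NP_def by (simp add: less_eq_vec_def)
  qed (use d in \<open>simp_all add: d_def\<close>)
  moreover have "(\<Sum>k\<in>UNIV. (1 / d) *\<^sub>R (y + (d * (z - y) $ k) *\<^sub>R axis k 1)) = z"
  proof -
    have "(\<Sum>k\<in>UNIV. (1 / d) *\<^sub>R (y + (d * (z - y) $ k) *\<^sub>R axis k 1))
        = (\<Sum>k::'n\<in>UNIV. (1 / d) *\<^sub>R y) + (\<Sum>k\<in>UNIV. (z - y) $ k *\<^sub>R axis k 1)"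
      using d by (simp add: scaleR_add_right sum.distrib)
    also have "(\<Sum>k::'n\<in>UNIV. (1 / d) *\<^sub>R y) = y"
      by (simp only: sum_constant_scaleR) (simp add: d_def)
    also have "(\<Sum>k\<in>UNIV. (z - y) $ k *\<^sub>R axis k 1) = z - y"
      using basis_expansion[of "z - y"] by (simp add: scalar_mult_eq_scaleR)
    finally show ?thesis by simp
  qed
  ultimately show ?thesis by simp
qed

lemma scaled_NP_upward_closed:
  fixes E :: "('n::finite \<Rightarrow> nat) set"
  assumes "monomial_ideal E" and "r > 0" and "y \<in> NP E" and "r *\<^sub>R y \<le> p"
  shows "p \<in> (\<lambda>x. r *\<^sub>R x) ` NP E"
proof -
  have "y \<le> (1 / r) *\<^sub>R p"
    using assms(2,4) by (simp add: less_eq_vec_def field_simps)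
  then have "(1 / r) *\<^sub>R p \<in> NP E"
    using NP_upward_closed assms(1,3) by blast
  moreover have "p = r *\<^sub>R ((1 / r) *\<^sub>R p)"
    using assms(2) by simp
  ultimately show ?thesis by blast
qed

definition cap_exponent :: "('n::finite \<Rightarrow> nat) set \<Rightarrow> real \<Rightarrow> ('n \<Rightarrow> nat) \<Rightarrow> 'n \<Rightarrow> nat" where
  "cap_exponent E r a i = min (a i) (nat \<lceil>r * upper_corner (gens E) $ i\<rceil>)"

lemma cap_exponent_le: "cap_exponent E r a \<le> a"
  by (simp add: cap_exponent_def le_fun_def)

lemma cap_exponent_nth:
  assumes "r \<ge> 0"
  shows "real (cap_exponent E r a i) = min (real (a i)) (of_int \<lceil>r * upper_corner (gens E) $ i\<rceil>)"
  using assms by (simp add: cap_exponent_def of_nat_min upper_corner_def)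

lemma scaled_np_le_cap_exponent:
  assumes r: "r \<ge> 0" and y: "y \<in> np E" and ya: "r *\<^sub>R y \<le> rv a"
  shows "r *\<^sub>R y \<le> rv (cap_exponent E r a)"
proof -
  have "r * y $ i \<le> real (cap_exponent E r a i)" for i
  proof -
    have "y $ i \<le> upper_corner (gens E) $ i"
      using subsetD[OF np_subset_corners y] by (simp add: less_eq_vec_def)
    then have "r * y $ i \<le> r * upper_corner (gens E) $ i"
      using r by (rule mult_left_mono)
    then have "r * y $ i \<le> of_int \<lceil>r * upper_corner (gens E) $ i\<rceil>"
      using le_of_int_ceiling[of "r * upper_corner (gens E) $ i"] by linarith
    moreover have "r * y $ i \<le> real (a i)"
      using ya by (simp add: less_eq_vec_def)
    ultimately show ?thesis
      unfolding cap_exponent_nth[OF r] by simp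
  qed
  then show ?thesis
    by (simp add: less_eq_vec_def)
qed

lemma cap_exponent_in_hype:
  assumes r: "r \<ge> 0" and y: "y \<in> np E" and ya: "r *\<^sub>R y \<le> rv a"
  shows "rv (cap_exponent E r a) \<in> hype E r"
proof -
  let ?lo = "lower_corner (gens E)" and ?hi = "upper_corner (gens E)"
  have "gens E \<noteq> {}"
    using y by (auto simp: np_def)
  have "of_int \<lceil>r * ?lo $ i\<rceil> \<le> real (cap_exponent E r a i)" for i
  proof -
    have "?lo $ i \<le> y $ i" "y $ i \<le> ?hi $ i"
      using subsetD[OF np_subset_corners y] by (simp_all add: less_eq_vec_def)
    then have lo_y: "r * ?lo $ i \<le> r * y $ i" and y_hi: "r * y $ i \<le> r * ?hi $ i"
      using r by (simp_all add: mult_left_mono)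
    have "r * y $ i \<le> real (a i)"
      using ya by (simp add: less_eq_vec_def)
    with lo_y have "\<lceil>r * ?lo $ i\<rceil> \<le> int (a i)"
      by (simp add: ceiling_le_iff)
    moreover have "\<lceil>r * ?lo $ i\<rceil> \<le> \<lceil>r * ?hi $ i\<rceil>"
      using lo_y y_hi by (intro ceiling_mono) linarith
    ultimately show ?thesis
      unfolding cap_exponent_nth[OF r] by (metis min.boundedI of_int_le_iff of_int_of_nat_eq)
  qed
  then show ?thesis
    unfolding hype_eq_corners[OF \<open>gens E \<noteq> {}\<close> r] by (simp add: cap_exponent_nth[OF r])
qed

lemma cap_exponent_in_scaled_NP_hype:
  assumes E: "monomial_ideal E" and r: "r \<ge> 0" and x: "x \<in> NP E" and a: "rv a = r *\<^sub>R x"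
  shows "rv (cap_exponent E r a) \<in> (\<lambda>x. r *\<^sub>R x) ` NP E \<inter> hype E r"
proof -
  obtain y where y: "y \<in> np E" "y \<le> x"
    using NP_dominates_np x by blast
  have ya: "r *\<^sub>R y \<le> rv a"
    using y(2) r unfolding a by (simp add: less_eq_vec_def mult_left_mono)
  have "rv (cap_exponent E r a) \<in> (\<lambda>x. r *\<^sub>R x) ` NP E"
  proof (cases "r = 0")
    case True
    have "a i = 0" for i
      using arg_cong[OF a, of "\<lambda>v. v $ i"] True by simp
    then have "cap_exponent E r a = a"
      by (simp add: cap_exponent_def fun_eq_iff)
    with a x show ?thesis by (metis image_eqI)
  next
    case False
    with r have "r > 0" by simp
    moreover have "r *\<^sub>R y \<le> rv (cap_exponent E r a)"
      by (rule scaled_np_le_cap_exponent[OF r y(1) ya])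
    ultimately show ?thesis
      using scaled_NP_upward_closed[OF E] np_subset_NP y(1) by blast
  qed
  moreover have "rv (cap_exponent E r a) \<in> hype E r"
    by (rule cap_exponent_in_hype[OF r y(1) ya])
  ultimately show ?thesis by blast
qed

theorem lemma4p4:
  fixes E :: "('n::finite \<Rightarrow> nat) set" and r :: real
  assumes "monomial_ideal E" and "r \<ge> 0"
  shows "ceil_set ((\<lambda>x. r *\<^sub>R x) ` np E) \<subseteq> SS E r \<and>
         int_closure_pow E r =
           ideal_gen {a. rv a \<in> (\<lambda>x. r *\<^sub>R x) ` NP E \<inter> hype E r}"
proof
  show "ceil_set ((\<lambda>x. r *\<^sub>R x) ` np E) \<subseteq> SS E r"
    using ceil_set_scaled_np_subset_SS[OF assms(2)] .
  show "int_closure_pow E r = ideal_gen {a. rv a \<in> (\<lambda>x. r *\<^sub>R x) ` NP E \<inter> hype E r}"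
  proof
    show "int_closure_pow E r \<subseteq> ideal_gen {a. rv a \<in> (\<lambda>x. r *\<^sub>R x) ` NP E \<inter> hype E r}"
    proof
      fix b assume "b \<in> int_closure_pow E r"
      then obtain a x where ab: "a \<le> b" and "x \<in> NP E" "rv a = r *\<^sub>R x"
        unfolding int_closure_pow_def ideal_gen_def by auto
      then have "rv (cap_exponent E r a) \<in> (\<lambda>x. r *\<^sub>R x) ` NP E \<inter> hype E r"
        using cap_exponent_in_scaled_NP_hype[OF assms] by blast
      moreover have "cap_exponent E r a \<le> b"
        using cap_exponent_le ab by (rule order.trans)
      ultimately show "b \<in> ideal_gen {a. rv a \<in> (\<lambda>x. r *\<^sub>R x) ` NP E \<inter> hype E r}"
        unfolding ideal_gen_def by blast
    qed
    show "ideal_gen {a. rv a \<in> (\<lambda>x. r *\<^sub>R x) ` NP E \<inter> hype E r} \<subseteq> int_closure_pow E r"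
      unfolding int_closure_pow_def ideal_gen_def by auto
  qed
qed

end
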